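(* Let $k\in\mathbb N$, $k\ge1$. Then the polynomial $2^{2(k-1)}(a^{2k}-b^{2k})^2-(a^2-b^2)^{2k}\in\mathbb R[a,b]$ is a sum of squares of polynomials (of degree at most $2k$). *)

theory Defs
  imports "HOL-Computational_Algebra.Polynomial"
begin

text \<open>Bivariate real polynomials R[a,b] are represented as R[a][b], i.e. the type
  real poly poly: the outer variable is b, coefficients are polynomials in a.\<close>

definition var_a :: "real poly poly" where
  "var_a = [:[:0, 1:]:]"

definition var_b :: "real poly poly" where
  "var_b = [:0, 1:]"

definition total_degree :: "real poly poly \<Rightarrow> nat" where
  "total_degree p =
     (if p = 0 then 0
      else Max ((\<lambda>i. i + degree (coeff p i)) ` {i. coeff p i \<noteq> 0}))"

end

theory Submission
  imports Defs
begin

text \<open>Put \<open>x = a^2\<close>, \<open>y = b^2\<close> and \<open>n = k - 1\<close>. Factoring \<open>(x - y)^2\<close> out of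
  \<open>4^n (x^(n+1) - y^(n+1))^2 - (x - y)^(2n+2)\<close> leaves \<open>4^n S^2 - ((x - y)^n)^2\<close> with
  \<open>S = \<Sum>i\<le>n. x^i y^(n-i)\<close>. Expanding both squares over pairs \<open>(i, j)\<close>, the coefficient
  of \<open>x^(i+j) y^(2n-i-j)\<close> is \<open>4^n \<plusminus> C(n,i) C(n,j)\<close>, which is nonnegative because binomial
  coefficients are at most \<open>2^n\<close>. Each summand is then the square of
  \<open>\<surd>coefficient \<cdot> (a^2 - b^2) a^(i+j) b^(2n-i-j)\<close>, of total degree \<open>2n + 2 = 2k\<close>.\<close>

definition binomial_gap :: "nat \<Rightarrow> nat \<Rightarrow> nat \<Rightarrow> int" where
  "binomial_gap n i j = 4^n - (-1)^(n-i) * (-1)^(n-j) * int (n choose i) * int (n choose j)"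

lemma binomial_gap_nonneg: "0 \<le> binomial_gap n i j"
proof -
  have "int (n choose i) \<le> 2^n" "int (n choose j) \<le> 2^n"
    using binomial_le_pow2 by (metis of_nat_le_iff of_nat_numeral of_nat_power)+
  then have "int (n choose i) * int (n choose j) \<le> 2^n * 2^n"
    by (intro mult_mono) auto
  also have "\<dots> = 4^n"
    by (simp flip: power_mult_distrib)
  moreover have "\<bar>(-1)^(n-i) * (-1)^(n-j) * int (n choose i) * int (n choose j)\<bar>
      = int (n choose i) * int (n choose j)"
    by (simp add: abs_mult)
  ultimately show ?thesis
    unfolding binomial_gap_def by linarith
qed

lemma binomial_gap_summand:
  fixes x y :: "'a::comm_ring_1"
  shows "4^n * (x^i * y^(n-i) * (x^j * y^(n-j)))
      - of_nat (n choose i) * x^i * (-y)^(n-i) * (of_nat (n choose j) * x^j * (-y)^(n-j))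
    = of_int (binomial_gap n i j) * (x^(i+j) * y^((n-i)+(n-j)))"
proof -
  have "x^(i+j) * y^((n-i)+(n-j)) = x^i * y^(n-i) * (x^j * y^(n-j))"
    by (simp add: power_add mult_ac)
  moreover have "of_nat (n choose i) * x^i * (-y)^(n-i) * (of_nat (n choose j) * x^j * (-y)^(n-j))
      = (-1)^(n-i) * (-1)^(n-j) * of_nat (n choose i) * of_nat (n choose j)
        * (x^i * y^(n-i) * (x^j * y^(n-j)))"
    by (simp only: power_minus[of y] mult_ac)
  ultimately show ?thesis
    by (simp add: binomial_gap_def left_diff_distrib)
qed

lemma geometric_square_minus_binomial_square:
  fixes x y :: "'a::comm_ring_1"
  shows "4^n * (\<Sum>i\<le>n. x^i * y^(n-i))^2 - ((x - y)^n)^2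
    = (\<Sum>i\<le>n. \<Sum>j\<le>n. of_int (binomial_gap n i j) * (x^(i+j) * y^((n-i)+(n-j))))"
proof -
  have binomial: "(x - y)^n = (\<Sum>i\<le>n. of_nat (n choose i) * x^i * (-y)^(n-i))"
    using binomial_ring[of x "-y" n] by simp
  have "4^n * (\<Sum>i\<le>n. x^i * y^(n-i))^2 - ((x - y)^n)^2
      = (\<Sum>i\<le>n. \<Sum>j\<le>n. 4^n * (x^i * y^(n-i) * (x^j * y^(n-j))))
        - (\<Sum>i\<le>n. \<Sum>j\<le>n. of_nat (n choose i) * x^i * (-y)^(n-i)
                             * (of_nat (n choose j) * x^j * (-y)^(n-j)))"
    unfolding binomial power2_eq_square sum_product by (simp only: sum_distrib_left)
  then show ?thesis
    by (simp only: sum_subtractf[symmetric] binomial_gap_summand)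
qed

lemma power_diff_square_sos_identity:
  fixes x y :: "'a::comm_ring_1"
  shows "4^n * (x^Suc n - y^Suc n)^2 - (x - y)^(2 * Suc n)
    = (\<Sum>i\<le>n. \<Sum>j\<le>n. of_int (binomial_gap n i j) * ((x - y)^2 * (x^(i+j) * y^((n-i)+(n-j)))))"
proof -
  have factor: "x^Suc n - y^Suc n = (x - y) * (\<Sum>i\<le>n. x^i * y^(n-i))"
    by (simp only: diff_power_eq_sum lessThan_Suc_atMost)
  have split: "(x - y)^(2 * Suc n) = (x - y)^2 * ((x - y)^n)^2"
    by (simp flip: power_mult power_add add: mult.commute)
  have "4^n * (x^Suc n - y^Suc n)^2 - (x - y)^(2 * Suc n)
      = (x - y)^2 * (4^n * (\<Sum>i\<le>n. x^i * y^(n-i))^2 - ((x - y)^n)^2)"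
    unfolding factor split by (simp only: power_mult_distrib right_diff_distrib mult.left_commute)
  then show ?thesis
    by (simp only: geometric_square_minus_binomial_square sum_distrib_left mult.left_commute)
qed

lemma var_a_power: "var_a ^ m = [:monom 1 m:]"
  unfolding var_a_def by (induction m) (auto simp: monom_Suc mult_monom)

lemma var_b_power: "var_b ^ m = monom 1 m"
  unfolding var_b_def by (simp add: monom_altdef)

lemma total_degree_le:
  assumes "\<And>t. coeff p t \<noteq> 0 \<Longrightarrow> t + degree (coeff p t) \<le> d"
  shows "total_degree p \<le> d"
proof (cases "p = 0")
  case False
  have "finite {i. coeff p i \<noteq> 0}"
    by (rule finite_subset[of _ "{..degree p}"]) (auto intro: le_degree)
  moreover have "{i. coeff p i \<noteq> 0} \<noteq> {}"
    using False leading_coeff_0_iff by blast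
  ultimately show ?thesis
    unfolding total_degree_def using False assms by (simp add: Max_le_iff)
qed (simp add: total_degree_def)

definition sos_term :: "real \<Rightarrow> nat \<Rightarrow> nat \<Rightarrow> real poly poly" where
  "sos_term c m r = [:[:c:]:] * (var_a^2 - var_b^2) * var_a^m * var_b^r"

lemma sos_term_eq_monoms: "sos_term c m r = monom (monom c (m+2)) r - monom (monom c m) (r+2)"
  unfolding sos_term_def var_a_power var_b_power
  by (simp add: algebra_simps mult_monom smult_monom)

lemma total_degree_sos_term_le: "total_degree (sos_term c m r) \<le> m + r + 2"
proof (rule total_degree_le)
  fix t
  assume "coeff (sos_term c m r) t \<noteq> 0"
  then have "t = r \<or> t = r + 2"
    by (auto simp: sos_term_eq_monoms coeff_monom split: if_splits)
  then show "t + degree (coeff (sos_term c m r) t) \<le> m + r + 2"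
    using degree_monom_le[of c "m+2"] degree_monom_le[of c m]
    by (auto simp: sos_term_eq_monoms coeff_monom)
qed

lemma sos_term_sqrt_square:
  assumes "0 \<le> c"
  shows "sos_term (sqrt c) m r ^ 2 = [:[:c:]:] * ((var_a^2 - var_b^2)^2 * ((var_a^2)^m * (var_b^2)^r))"
proof -
  have const: "[:[:sqrt c:]:] ^ 2 = [:[:c:]:]"
    using assms by (simp add: power2_eq_square)
  have product: "(u * v * w * z)^2 = u^2 * (v^2 * (w^2 * z^2))" for u v w z :: "'a::comm_monoid_mult"
    by (simp add: power_mult_distrib mult_ac)
  have swap: "(u^l)^2 = (u^2)^l" for u :: "'a::monoid_mult" and l
    by (simp flip: power_mult add: mult.commute)
  show ?thesis
    unfolding sos_term_def product swap const ..
qed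

lemma sum_list_map_product_upt:
  "(\<Sum>p\<leftarrow>List.product [0..<m] [0..<m']. f p) = (\<Sum>i<m. \<Sum>j<m'. f (i, j))"
proof -
  have "set (List.product [0..<m] [0..<m']) = {..<m} \<times> {..<m'}"
    by auto
  then have "(\<Sum>p\<leftarrow>List.product [0..<m] [0..<m']. f p) = (\<Sum>p\<in>{..<m} \<times> {..<m'}. f p)"
    by (metis sum_list_distinct_conv_sum_set distinct_product distinct_upt)
  then show ?thesis
    by (simp add: sum.cartesian_product)
qed

theorem mainTheorem18:
  fixes k :: nat
  assumes "k \<ge> 1"
  shows "\<exists>qs :: real poly poly list.
           2 ^ (2 * (k - 1)) * (var_a ^ (2 * k) - var_b ^ (2 * k)) ^ 2
             - (var_a ^ 2 - var_b ^ 2) ^ (2 * k)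
           = (\<Sum>q\<leftarrow>qs. q ^ 2)
         \<and> (\<forall>q\<in>set qs. total_degree q \<le> 2 * k)"
proof -
  obtain n where k: "k = Suc n"
    using assms by (cases k) auto
  define q where "q = (\<lambda>(i, j). sos_term (sqrt (binomial_gap n i j)) (i+j) ((n-i)+(n-j)))"
  define qs where "qs = map q (List.product [0..<Suc n] [0..<Suc n])"
  have "(\<Sum>q\<leftarrow>qs. q ^ 2) = (\<Sum>i\<le>n. \<Sum>j\<le>n. q (i, j) ^ 2)"
    unfolding qs_def by (simp add: o_def sum_list_map_product_upt lessThan_Suc_atMost del: upt_Suc)
  also have "\<dots> = 4^n * ((var_a^2)^Suc n - (var_b^2)^Suc n)^2 - (var_a^2 - var_b^2)^(2 * Suc n)"
    unfolding power_diff_square_sos_identity q_def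
    by (simp add: sos_term_sqrt_square binomial_gap_nonneg of_int_poly add.commute)
  also have "\<dots> = 2 ^ (2 * (k - 1)) * (var_a ^ (2 * k) - var_b ^ (2 * k)) ^ 2
             - (var_a ^ 2 - var_b ^ 2) ^ (2 * k)"
    by (simp add: k power_mult power2_eq_square mult.assoc)
  moreover have "total_degree p \<le> 2 * k" if p: "p \<in> set qs" for p
  proof -
    obtain i j where "i \<le> n" "j \<le> n" "p = q (i, j)"
      using p by (auto simp: qs_def less_Suc_eq_le simp del: upt_Suc)
    then show ?thesis
      using total_degree_sos_term_le[of _ "i+j" "(n-i)+(n-j)"] by (simp add: q_def k mult_2 add.commute)
  qed
  ultimately show ?thesis
    by metis
qed

end
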